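(* Let $c\ge 0$ be a real number, $q$ a positive integer, and $(e_n)_{n\ge q}$ a sequence of real numbers such that $$e_n\le c+\frac1n\sum_{u=q}^{n-1}e_u\quad\text{for all } n\ge q.$$ Then $e_n\le c\log(en/q)$ for all $n\ge q$ (here $e$ inside the logarithm is Euler's number). *)

theory Defs
  imports Complex_Main
begin

end

theory Submission
  imports Defs
begin

text \<open>The function \<open>g n = c (1 + ln n - ln q)\<close> satisfies the recursion with \<open>\<ge>\<close> in place
  of \<open>\<le>\<close>, because its average over \<open>q..<n\<close> is at most \<open>c (ln n - ln q)\<close>; this comes from
  \<open>1/(m+1) \<le> ln (m+1) - ln m\<close>. A strong induction on \<open>n\<close> then compares \<open>e\<close> with \<open>g\<close>.\<close>

lemma inverse_Suc_le_ln_diff: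
  fixes n :: nat
  assumes "n > 0"
  shows "1 / real (Suc n) \<le> ln (real (Suc n)) - ln (real n)"
proof -
  have "ln (real n / real (Suc n)) \<le> real n / real (Suc n) - 1"
    using assms by (intro ln_le_minus_one) auto
  moreover have "ln (real n / real (Suc n)) = ln (real n) - ln (real (Suc n))"
    using assms by (simp add: ln_div)
  moreover have "real n / real (Suc n) - 1 = - 1 / real (Suc n)"
    by (simp add: field_simps)
  ultimately show ?thesis by simp
qed

lemma sum_one_plus_ln_ratio_le:
  fixes q n :: nat
  assumes "q > 0" "q \<le> n"
  shows "(\<Sum>u = q..<n. 1 + ln (real u) - ln (real q)) \<le> real n * (ln (real n) - ln (real q))"
  using assms(2)
proof (induction n rule: dec_induct)
  case base
  then show ?case by simp
next
  case (step m)
  have "1 \<le> real (Suc m) * (ln (real (Suc m)) - ln (real m))"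
    using inverse_Suc_le_ln_diff[of m] step.hyps assms(1) by (simp add: field_simps)
  then show ?case
    using step by (simp add: algebra_simps)
qed

lemma le_supersolution_of_average_recursion:
  fixes c :: real and e g :: "nat \<Rightarrow> real"
  assumes sub: "\<And>n. n \<ge> q \<Longrightarrow> e n \<le> c + (1 / real n) * (\<Sum>u = q..<n. e u)"
    and super: "\<And>n. n \<ge> q \<Longrightarrow> c + (1 / real n) * (\<Sum>u = q..<n. g u) \<le> g n"
    and "n \<ge> q"
  shows "e n \<le> g n"
  using \<open>n \<ge> q\<close>
proof (induction n rule: less_induct)
  case (less n)
  have "(\<Sum>u = q..<n. e u) \<le> (\<Sum>u = q..<n. g u)"
    by (intro sum_mono less.IH) auto
  then have "(1 / real n) * (\<Sum>u = q..<n. e u) \<le> (1 / real n) * (\<Sum>u = q..<n. g u)"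
    by (intro mult_left_mono) auto
  then show ?case
    using sub[OF less.prems] super[OF less.prems] by linarith
qed

lemma log_bound_is_supersolution:
  fixes c :: real and q n :: nat
  assumes "c \<ge> 0" "q > 0" "q \<le> n"
  shows "c + (1 / real n) * (\<Sum>u = q..<n. c * (1 + ln (real u) - ln (real q)))
           \<le> c * (1 + ln (real n) - ln (real q))"
proof -
  have "(\<Sum>u = q..<n. c * (1 + ln (real u) - ln (real q)))
          \<le> c * (real n * (ln (real n) - ln (real q)))"
    using sum_one_plus_ln_ratio_le[OF assms(2,3)] assms(1)
    by (simp add: sum_distrib_left[symmetric] mult_left_mono)
  then have "(1 / real n) * (\<Sum>u = q..<n. c * (1 + ln (real u) - ln (real q)))
               \<le> c * (ln (real n) - ln (real q))"
    using assms(2,3) by (simp add: field_simps)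
  then show ?thesis by (simp add: algebra_simps)
qed

theorem lemma2p1:
  fixes c :: real and q :: nat and e :: "nat \<Rightarrow> real"
  assumes "c \<ge> 0" and "q > 0"
    and "\<And>n. n \<ge> q \<Longrightarrow> e n \<le> c + (1 / real n) * (\<Sum>u = q..<n. e u)"
  shows "\<And>n. n \<ge> q \<Longrightarrow> e n \<le> c * ln (exp 1 * real n / real q)"
proof -
  fix n assume "n \<ge> q"
  then have "e n \<le> c * (1 + ln (real n) - ln (real q))"
    using le_supersolution_of_average_recursion[OF assms(3) log_bound_is_supersolution[OF assms(1,2)]]
    by blast
  moreover have "ln (exp 1 * real n / real q) = 1 + ln (real n) - ln (real q)"
    using \<open>n \<ge> q\<close> assms(2) by (simp add: ln_div ln_mult)
  ultimately show "e n \<le> c * ln (exp 1 * real n / real q)" by simp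
qed

end
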